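(* Let $\gamma>0$ and let $K_{12}$ be the kernel of the Fourier multiplier $-\partial_{12}\Delta^{-1}\ln^{-\gamma}(e-\Delta)$ (i.e. the operator with symbol $-\frac{k_1k_2}{|k|^2}\ln^{-\gamma}(e+|k|^2)$). Then there is a constant $C>0$ depending only on $\gamma$ such that for all $x=(x_1,x_2)\in\mathbb{R}^2$ with $x_1>0$, $x_2>0$, $$K_{12}(x_1,x_2)\ge \frac{C x_1x_2}{|x|^4}\ln^{-\gamma}\Big(e+\frac1{|x|}\Big)e^{-|x|^2}.$$ *)

theory Defs
  imports "HOL-Analysis.Analysis"
begin

text \<open>Points of the plane are pairs of reals: x = (x1, x2).
  Fourier convention: f(x) = (2 pi)^(-2) int \<hat>f(k) e^(i k.x) dk, so that
  the derivative d/dx_j has symbol i k_j.\<close>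

definition symb12 :: "real \<Rightarrow> real \<times> real \<Rightarrow> real" where
  "symb12 \<gamma> k = - (fst k * snd k) / (norm k)^2 * (ln (exp 1 + (norm k)^2)) powr (- \<gamma>)"

text \<open>Gaussian-regularised inverse Fourier transform of the symbol; the kernel
  at x is the limit of this as eps tends to 0+.\<close>
definition K12_reg :: "real \<Rightarrow> real \<Rightarrow> real \<times> real \<Rightarrow> complex" where
  "K12_reg \<gamma> \<epsilon> x = (1 / (2 * pi)^2) *
     (LINT k|lborel. complex_of_real (symb12 \<gamma> k * exp (- \<epsilon> * (norm k)^2))
                       * cis (k \<bullet> x))"

end

theory Submission
  imports Defs "HOL-Probability.Probability" "HOL-Real_Asymp.Real_Asymp"
begin

text \<open>
  Let \<open>T\<close> have law \<open>Gamma(\<gamma>, 1)\<close> and, given \<open>T\<close>, let \<open>S\<close> have law \<open>Gamma(T, e)\<close>. Then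
  \<open>E exp (- \<lambda> S) = ln (e + \<lambda>) powr (- \<gamma>)\<close>, so with \<open>\<rho> = mix_cdf \<gamma>\<close> the distribution function of \<open>S\<close>,
  \<open>ln (e + \<lambda>) powr (- \<gamma>) / \<lambda> = \<integral>\<^sub>0\<^sup>\<infinity> \<rho>(u) exp (- \<lambda> u) du\<close>. Taking \<open>\<lambda> = |k|^2\<close>, the symbol becomes
  \<open>- k1 k2 \<integral>\<^sub>0\<^sup>\<infinity> \<rho>(u) exp (- u |k|^2) du\<close>, and by Fubini the regularised kernel is
  \<open>(2 pi)^(-2) \<integral>\<^sub>0\<^sup>\<infinity> \<rho>(u) H(x, u + \<epsilon>) du\<close>, where \<open>H(x, a) = heat_d12 x a = pi x1 x2 / (4 a^3) exp (- |x|^2 / (4 a))\<close>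
  equals \<open>\<integral> - k1 k2 exp (- a |k|^2) exp (i k\<cdot>x) dk\<close>, a product of one-dimensional Gaussian
  integrals. \<open>H\<close> is positive in the first quadrant and dominated uniformly in \<open>\<epsilon>\<close>, which gives
  the limit \<open>\<epsilon> \<rightarrow> 0\<close>. For the lower bound only \<open>u \<in> [|x|^2, 2 |x|^2]\<close> is kept: there
  \<open>H(x, u) \<ge> c x1 x2 / |x|^6\<close>, and \<open>\<rho>(u) \<ge> P(T \<le> \<delta>, S \<le> u)\<close> with \<open>\<delta> = 1 / (2 ln (e + 1/u))\<close>:
  given \<open>T \<le> \<delta>\<close>, the event \<open>S \<le> min u 1\<close> has probability bounded below, while
  \<open>P(T \<le> \<delta>) \<ge> c \<delta>^\<gamma> \<ge> c ln (e + 1/|x|) powr (- \<gamma>)\<close>.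
\<close>

lemma borel_measurable_cis [measurable]: "cis \<in> borel_measurable borel"
  by (intro borel_measurable_continuous_onI continuous_intros)

lemma borel_measurable_fst_real_pair [measurable]: "(fst :: real \<times> real \<Rightarrow> real) \<in> borel_measurable borel"
  by (intro borel_measurable_continuous_onI continuous_intros)

lemma borel_measurable_snd_real_pair [measurable]: "(snd :: real \<times> real \<Rightarrow> real) \<in> borel_measurable borel"
  by (intro borel_measurable_continuous_onI continuous_intros)

lemma borel_measurable_inner_left [measurable]: "(\<lambda>k::real \<times> real. k \<bullet> x) \<in> borel_measurable borel"
  by (intro borel_measurable_continuous_onI continuous_intros)

lemma normal_density_0_eq_gaussian:
  assumes "a > (0::real)"
  shows "normal_density 0 (1 / sqrt (2 * a)) x = sqrt (a / pi) * exp (- a * x\<^sup>2)"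
  using assms by (simp add: normal_density_def real_sqrt_divide power_divide field_simps)

lemma has_bochner_integral_gaussian:
  assumes a: "a > (0::real)"
  shows "has_bochner_integral lborel (\<lambda>x. exp (- a * x\<^sup>2)) (sqrt (pi / a))"
proof -
  have "has_bochner_integral lborel (normal_density 0 (1 / sqrt (2 * a))) 1"
    using a by (simp add: has_bochner_integral_iff)
  from has_bochner_integral_mult_right[OF this, of "sqrt (pi / a)"]
  have "has_bochner_integral lborel
      (\<lambda>x. sqrt (pi / a) * normal_density 0 (1 / sqrt (2 * a)) x) (sqrt (pi / a))"
    by simp
  also have "(\<lambda>x. sqrt (pi / a) * normal_density 0 (1 / sqrt (2 * a)) x) = (\<lambda>x. exp (- a * x\<^sup>2))"
    using a by (simp add: normal_density_0_eq_gaussian real_sqrt_divide)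
  finally show ?thesis .
qed

lemma has_bochner_integral_abs_mult_gaussian:
  assumes a: "a > (0::real)"
  shows "has_bochner_integral lborel (\<lambda>x. \<bar>x\<bar> * exp (- a * x\<^sup>2)) (1 / a)"
proof -
  let ?f = "\<lambda>x. normal_density 0 (1 / sqrt (2 * a)) x * \<bar>x - 0\<bar> ^ (2 * 0 + 1)"
  have "has_bochner_integral lborel ?f (2 ^ 0 * (1 / sqrt (2 * a)) ^ (2 * 0 + 1) * fact 0 * sqrt (2 / pi))"
    using a by (intro normal_moment_abs_odd) simp
  from has_bochner_integral_mult_right[OF this, of "sqrt (pi / a)"]
  have "has_bochner_integral lborel (\<lambda>x. sqrt (pi / a) * ?f x) (1 / a)"
    using a by (simp add: real_sqrt_divide real_sqrt_mult field_simps)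
  also have "(\<lambda>x. sqrt (pi / a) * ?f x) = (\<lambda>x. \<bar>x\<bar> * exp (- a * x\<^sup>2))"
    by (rule ext, subst normal_density_0_eq_gaussian[OF a]) (use a in \<open>simp add: real_sqrt_divide\<close>)
  finally show ?thesis .
qed

lemma has_bochner_integral_gaussian_cis:
  assumes a: "a > (0::real)"
  shows "has_bochner_integral lborel (\<lambda>k. complex_of_real (exp (- a * k\<^sup>2)) * cis (k * y))
           (complex_of_real (sqrt (pi / a) * exp (- y\<^sup>2 / (4 * a))))"
proof -
  define c where "c = sqrt (2 * a)"
  have c: "c > 0" "c\<^sup>2 = 2 * a" using a by (simp_all add: c_def)
  define t where "t = y / c"
  have "char std_normal_distribution t = exp (- (t\<^sup>2) / 2)"
    by (simp add: char_std_normal_distribution)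
  then have "(CLINT x|lborel. std_normal_density x *\<^sub>R iexp (t * x)) = exp (- (t\<^sup>2) / 2)"
    unfolding char_def by (subst (asm) integral_density) auto
  then have "\<bar>c\<bar> *\<^sub>R (CLINT x|lborel. std_normal_density (0 + c * x) *\<^sub>R iexp (t * (0 + c * x)))
      = exp (- (t\<^sup>2) / 2)"
    using c by (subst (asm) lborel_integral_real_affine[where c = c and t = 0]) auto
  moreover have "(\<lambda>x. std_normal_density (c * x) *\<^sub>R iexp (t * (c * x))) =
      (\<lambda>x. (1 / sqrt (2 * pi)) * (complex_of_real (exp (- a * x\<^sup>2)) * cis (x * y)))"
    using c by (auto simp: fun_eq_iff std_normal_density_def t_def cis_conv_exp scaleR_conv_of_real
        power_mult_distrib mult_ac)
  ultimately have integral: "(CLINT x|lborel. complex_of_real (exp (- a * x\<^sup>2)) * cis (x * y))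
      = of_real (sqrt (2 * pi) * exp (- (t\<^sup>2) / 2) / c)"
    using c by (simp add: field_simps scaleR_conv_of_real)
  have const: "sqrt (2 * pi) * exp (- (t\<^sup>2) / 2) / c = sqrt (pi / a) * exp (- y\<^sup>2 / (4 * a))"
    using a c by (simp add: t_def c_def power_divide real_sqrt_divide real_sqrt_mult field_simps)
  have "integrable lborel (\<lambda>k. complex_of_real (exp (- a * k\<^sup>2)) * cis (k * y))"
  proof (rule Bochner_Integration.integrable_bound)
    show "integrable lborel (\<lambda>k. exp (- a * k\<^sup>2))"
      using has_bochner_integral_gaussian[OF a] by (simp add: has_bochner_integral_iff)
  qed (auto simp: norm_mult)
  with integral[unfolded const] show ?thesis
    by (simp add: has_bochner_integral_iff)
qed

lemma lborel_integral_has_vector_derivative_eq_0: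
  fixes f F :: "real \<Rightarrow> 'a::euclidean_space"
  assumes "\<And>x. (F has_vector_derivative f x) (at x)" "\<And>x. isCont f x" "integrable lborel f"
    and "(F \<longlongrightarrow> 0) at_bot" "(F \<longlongrightarrow> 0) at_top"
  shows "integral\<^sup>L lborel f = 0"
proof -
  have "interval_lebesgue_integral lborel (-\<infinity>) \<infinity> f = 0 - 0"
  proof (rule interval_integral_FTC_integrable)
    show "set_integrable lborel (einterval (-\<infinity>) \<infinity>) f"
      using assms(3) by (simp add: set_integrable_def einterval_eq_UNIV)
    show "((F \<circ> real_of_ereal) \<longlongrightarrow> 0) (at_right (-\<infinity>))"
      unfolding at_right_MInf filterlim_filtermap using assms(4) by (simp add: o_def)
    show "((F \<circ> real_of_ereal) \<longlongrightarrow> 0) (at_left \<infinity>)"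
      unfolding at_left_PInf filterlim_filtermap using assms(5) by (simp add: o_def)
  qed (use assms in simp_all)
  then show ?thesis
    by (simp add: interval_lebesgue_integral_def set_lebesgue_integral_def einterval_eq_UNIV)
qed

text \<open>\<open>k E(k) - i y / (2 a) E(k)\<close>, with \<open>E(k) = exp (- a k^2 + i y k)\<close>, is the derivative of
  \<open>- E(k) / (2 a)\<close>, which vanishes at \<open>\<plusminus>\<infinity>\<close>; so its integral is 0.\<close>
lemma has_bochner_integral_mult_gaussian_cis:
  assumes a: "a > (0::real)"
  shows "has_bochner_integral lborel (\<lambda>k. complex_of_real (k * exp (- a * k\<^sup>2)) * cis (k * y))
           (\<i> * complex_of_real (y / (2 * a) * sqrt (pi / a) * exp (- y\<^sup>2 / (4 * a))))"
proof -
  define E where "E = (\<lambda>k. complex_of_real (exp (- a * k\<^sup>2)) * cis (k * y))"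
  define kE where "kE = (\<lambda>k. complex_of_real (k * exp (- a * k\<^sup>2)) * cis (k * y))"
  define G where "G z = - exp (- of_real a * z\<^sup>2 + \<i> * of_real y * z) / of_real (2 * a)" for z
  define G' where "G' z = (z - \<i> * of_real (y / (2 * a))) * exp (- of_real a * z\<^sup>2 + \<i> * of_real y * z)"
    for z
  have G_of_real: "exp (- of_real a * (of_real k)\<^sup>2 + \<i> * of_real y * of_real k) = E k" for k
    by (simp add: E_def cis_conv_exp exp_of_real[symmetric] mult_exp_exp algebra_simps)
  have G'_of_real: "G' (of_real k) = kE k - \<i> * of_real (y / (2 * a)) * E k" for k
    unfolding G'_def G_of_real by (simp add: E_def kE_def algebra_simps)
  have int_E: "integrable lborel E" and integral_E: "integral\<^sup>L lborel E = of_real (sqrt (pi / a) * exp (- y\<^sup>2 / (4 * a)))"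
    using has_bochner_integral_gaussian_cis[OF a, of y] by (simp_all add: E_def has_bochner_integral_iff)
  have int_kE: "integrable lborel kE"
    unfolding kE_def
  proof (rule Bochner_Integration.integrable_bound)
    show "integrable lborel (\<lambda>k. \<bar>k\<bar> * exp (- a * k\<^sup>2))"
      using has_bochner_integral_abs_mult_gaussian[OF a] by (simp add: has_bochner_integral_iff)
  qed (auto simp: norm_mult abs_mult)
  have "integral\<^sup>L lborel (\<lambda>k. G' (of_real k)) = 0"
  proof (rule lborel_integral_has_vector_derivative_eq_0)
    have "(G has_field_derivative G' z) (at z)" for z
      unfolding G_def G'_def using a
      by (auto intro!: derivative_eq_intros simp: field_simps power2_eq_square)
    then show "((\<lambda>k. G (of_real k)) has_vector_derivative G' (of_real k)) (at k)" for k
      by (rule has_vector_derivative_real_field)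
    show "isCont (\<lambda>k. G' (of_real k)) k" for k
      unfolding G'_def by (intro continuous_intros)
    show "integrable lborel (\<lambda>k. G' (of_real k))"
      unfolding G'_of_real by (intro Bochner_Integration.integrable_diff integrable_mult_right int_E int_kE)
    have norm_G: "norm (G (of_real k)) = exp (- a * k\<^sup>2) / (2 * a)" for k
      unfolding G_def G_of_real using a by (simp add: E_def norm_mult norm_divide)
    show "((\<lambda>k. G (of_real k)) \<longlongrightarrow> 0) at_bot" "((\<lambda>k. G (of_real k)) \<longlongrightarrow> 0) at_top"
      by (rule tendsto_norm_zero_cancel, unfold norm_G, use a in real_asymp)+
  qed
  then have "integral\<^sup>L lborel kE - integral\<^sup>L lborel (\<lambda>k. \<i> * of_real (y / (2 * a)) * E k) = 0"
    unfolding G'_of_real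
    by (subst (asm) Bochner_Integration.integral_diff) (auto intro!: int_E int_kE integrable_mult_right)
  then have "integral\<^sup>L lborel kE = \<i> * of_real (y / (2 * a)) * integral\<^sup>L lborel E"
    by (simp only: integral_mult_right_zero right_minus_eq)
  with int_kE integral_E show ?thesis
    by (simp add: kE_def has_bochner_integral_iff mult_ac)
qed

lemma has_bochner_integral_lborel_prod_mult:
  fixes f g :: "real \<Rightarrow> 'a::{real_normed_field, banach, second_countable_topology}"
  assumes f: "has_bochner_integral lborel f I" and g: "has_bochner_integral lborel g J"
  shows "has_bochner_integral lborel (\<lambda>k::real \<times> real. f (fst k) * g (snd k)) (I * J)"
proof -
  have int_f: "integrable lborel f" and int_g: "integrable lborel g"
    using f g by (auto simp: has_bochner_integral_iff)
  have [measurable]: "f \<in> borel_measurable borel" "g \<in> borel_measurable borel"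
    using borel_measurable_integrable[OF int_f] borel_measurable_integrable[OF int_g] by auto
  have int: "integrable (lborel \<Otimes>\<^sub>M lborel) (\<lambda>(x, y). f x * g y)"
  proof (rule lborel_pair.Fubini_integrable)
    have "integrable lborel (\<lambda>x. norm (f x) * (\<integral>y. norm (g y) \<partial>lborel))"
      using int_f by (intro integrable_mult_left integrable_norm)
    then show "integrable lborel (\<lambda>x. \<integral>y. norm (case (x, y) of (x, y) \<Rightarrow> f x * g y) \<partial>lborel)"
      by (simp add: norm_mult)
    show "AE x in lborel. integrable lborel (\<lambda>y. case (x, y) of (x, y) \<Rightarrow> f x * g y)"
      using int_g by (auto intro!: integrable_mult_right)
  qed measurable
  have "integral\<^sup>L (lborel \<Otimes>\<^sub>M lborel) (\<lambda>(x, y). f x * g y) = (\<integral>x. \<integral>y. f x * g y \<partial>lborel \<partial>lborel)"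
    using lborel_pair.integral_fst[OF int] by simp
  also have "\<dots> = I * J"
    using f g by (simp add: has_bochner_integral_iff)
  finally show ?thesis
    using int by (simp add: has_bochner_integral_iff lborel_prod split_beta')
qed

text \<open>\<open>heat_d12 x a\<close> is \<open>(2 pi)^2\<close> times the mixed derivative \<open>d_1 d_2\<close> of the heat kernel
  \<open>exp (- |x|^2 / (4 a)) / (4 pi a)\<close> at time \<open>a\<close>.\<close>
definition heat_d12 :: "real \<times> real \<Rightarrow> real \<Rightarrow> real" where
  "heat_d12 x a = pi * fst x * snd x / (4 * a ^ 3) * exp (- (norm x)\<^sup>2 / (4 * a))"

lemma borel_measurable_heat_d12 [measurable]: "heat_d12 x \<in> borel_measurable borel"
  unfolding heat_d12_def by measurable

lemma heat_d12_nonneg: "fst x \<ge> 0 \<Longrightarrow> snd x \<ge> 0 \<Longrightarrow> a \<ge> 0 \<Longrightarrow> heat_d12 x a \<ge> 0"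
  by (simp add: heat_d12_def)

lemma heat_d12_eq:
  "heat_d12 x a = (pi * fst x * snd x / 4) * (exp (- ((norm x)\<^sup>2 / 4) / a) / a ^ 3)"
  by (simp add: heat_d12_def field_simps)

lemma has_bochner_integral_k1k2_gaussian_cis:
  assumes a: "a > (0::real)"
  shows "has_bochner_integral lborel
     (\<lambda>k. complex_of_real (- (fst k * snd k) * exp (- a * (norm k)\<^sup>2)) * cis (k \<bullet> x))
     (complex_of_real (heat_d12 x a))"
proof -
  obtain x1 x2 where x: "x = (x1, x2)" by (cases x)
  define h where "h y = y / (2 * a) * sqrt (pi / a) * exp (- y\<^sup>2 / (4 * a))" for y
  have "has_bochner_integral lborel
     (\<lambda>k. (complex_of_real (fst k * exp (- a * (fst k)\<^sup>2)) * cis (fst k * x1)) *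
          (complex_of_real (snd k * exp (- a * (snd k)\<^sup>2)) * cis (snd k * x2)))
     ((\<i> * complex_of_real (h x1)) * (\<i> * complex_of_real (h x2)))"
    unfolding h_def
    by (intro has_bochner_integral_lborel_prod_mult has_bochner_integral_mult_gaussian_cis a)
  from has_bochner_integral_minus[OF this] show ?thesis
  proof (rule has_bochner_integral_cong[THEN iffD1, rotated 3])
    fix k :: "real \<times> real"
    have "exp (- a * (norm k)\<^sup>2) = exp (- a * (fst k)\<^sup>2) * exp (- a * (snd k)\<^sup>2)"
      by (simp add: norm_prod_def exp_add[symmetric] algebra_simps)
    then show "- ((complex_of_real (fst k * exp (- a * (fst k)\<^sup>2)) * cis (fst k * x1)) *
          (complex_of_real (snd k * exp (- a * (snd k)\<^sup>2)) * cis (snd k * x2))) =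
        complex_of_real (- (fst k * snd k) * exp (- a * (norm k)\<^sup>2)) * cis (k \<bullet> x)"
      by (simp add: x inner_prod_def cis_mult[symmetric] mult_ac)
    have "exp (- (x1\<^sup>2 + x2\<^sup>2) / (4 * a)) = exp (- x1\<^sup>2 / (4 * a)) * exp (- x2\<^sup>2 / (4 * a))"
      by (simp add: exp_add[symmetric] diff_divide_distrib)
    moreover have "sqrt (pi / a) * sqrt (pi / a) = pi / a" using a by simp
    ultimately have "h x1 * h x2 = heat_d12 x a"
      using a by (simp add: h_def heat_d12_def x norm_Pair field_simps power3_eq_cube)
    then show "- ((\<i> * complex_of_real (h x1)) * (\<i> * complex_of_real (h x2))) =
        complex_of_real (heat_d12 x a)"
      by (simp add: complex_eq_iff)
  qed simp
qed

lemma has_bochner_integral_abs_k1k2_gaussian: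
  assumes a: "a > (0::real)"
  shows "has_bochner_integral lborel (\<lambda>k. \<bar>fst k * snd k\<bar> * exp (- a * (norm k)\<^sup>2)) (1 / a\<^sup>2)"
proof -
  have "has_bochner_integral lborel
     (\<lambda>k. (\<bar>fst k\<bar> * exp (- a * (fst k)\<^sup>2)) * (\<bar>snd k\<bar> * exp (- a * (snd k)\<^sup>2))) (1 / a * (1 / a))"
    by (intro has_bochner_integral_lborel_prod_mult has_bochner_integral_abs_mult_gaussian a)
  moreover have "(\<lambda>k. (\<bar>fst k\<bar> * exp (- a * (fst k)\<^sup>2)) * (\<bar>snd k\<bar> * exp (- a * (snd k)\<^sup>2))) =
     (\<lambda>k. \<bar>fst k * snd k\<bar> * exp (- a * (norm k)\<^sup>2))"
    by (auto simp: fun_eq_iff norm_prod_def abs_mult algebra_simps exp_add[symmetric])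
  ultimately show ?thesis by (simp add: power2_eq_square)
qed

lemma borel_measurable_rGamma_real [measurable]: "(rGamma :: real \<Rightarrow> real) \<in> borel_measurable borel"
  by (rule borel_measurable_continuous_onI) (rule continuous_on_rGamma)

text \<open>Joint density of a pair \<open>(T, S)\<close> where \<open>T\<close> has law \<open>Gamma(\<gamma>, 1)\<close> and, given \<open>T = t\<close>,
  \<open>S\<close> has law \<open>Gamma(t, e)\<close> (rate \<open>e\<close>).\<close>
definition mix_density :: "real \<Rightarrow> real \<Rightarrow> real \<Rightarrow> real" where
  "mix_density \<gamma> t s = indicator {0<..} t * indicator {0<..} s *
     (t powr (\<gamma> - 1) * rGamma t / Gamma \<gamma> * s powr (t - 1) * exp (- (exp 1 * s)))"

lemma measurable_mix_density [measurable (raw)]: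
  assumes [measurable]: "f \<in> borel_measurable M" "g \<in> borel_measurable M"
  shows "(\<lambda>x. mix_density \<gamma> (f x) (g x)) \<in> borel_measurable M"
  unfolding mix_density_def by measurable

lemma mix_density_nonneg: "\<gamma> > 0 \<Longrightarrow> mix_density \<gamma> t s \<ge> 0"
  unfolding mix_density_def
  by (auto simp: indicator_def rGamma_inverse_Gamma intro!: mult_nonneg_nonneg)

lemma nn_integral_powr_exp:
  assumes b: "b > (0::real)" and c: "c > 0"
  shows "(\<integral>\<^sup>+s. ennreal (indicator {0<..} s * s powr (c - 1) * exp (- b * s)) \<partial>lborel)
       = ennreal (Gamma c / b powr c)"
proof -
  let ?g = "\<lambda>s. indicator {0<..} s * s powr (c - 1) * exp (- b * s)"
  have "ennreal (Gamma c) = (\<integral>\<^sup>+t. ennreal (indicator {0..} t * t powr (c - 1) / exp t) \<partial>lborel)"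
    using Gamma_conv_nn_integral_real[OF c] by simp
  also have "\<dots> = ennreal \<bar>b\<bar> * (\<integral>\<^sup>+s. ennreal (indicator {0..} (0 + b * s) * (0 + b * s) powr (c - 1)
      / exp (0 + b * s)) \<partial>lborel)"
    using b by (intro nn_integral_real_affine) auto
  also have "(\<lambda>s. ennreal (indicator {0..} (0 + b * s) * (0 + b * s) powr (c - 1) / exp (0 + b * s))) =
      (\<lambda>s. ennreal (b powr (c - 1)) * ennreal (?g s))"
    using b by (auto simp: fun_eq_iff ennreal_mult[symmetric] powr_mult exp_minus field_simps
        indicator_def zero_le_mult_iff)
  also have "(\<integral>\<^sup>+s. ennreal (b powr (c - 1)) * ennreal (?g s) \<partial>lborel)
      = ennreal (b powr (c - 1)) * (\<integral>\<^sup>+s. ennreal (?g s) \<partial>lborel)"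
    by (rule nn_integral_cmult) measurable
  finally have "ennreal (Gamma c) = ennreal (b powr c) * (\<integral>\<^sup>+s. ennreal (?g s) \<partial>lborel)"
    using b by (simp add: ennreal_mult[symmetric] mult.assoc[symmetric] powr_add[symmetric] powr_mult_base)
  then have "ennreal (inverse (b powr c)) * ennreal (Gamma c) = (\<integral>\<^sup>+s. ennreal (?g s) \<partial>lborel)"
    using b by (simp add: mult.assoc[symmetric] ennreal_mult[symmetric])
  then show ?thesis
    using b c by (simp add: ennreal_mult[symmetric] divide_inverse mult.commute)
qed

lemma nn_integral_mix_density_exp:
  assumes g: "\<gamma> > 0" and \<beta>: "\<beta> \<ge> 0"
  shows "(\<integral>\<^sup>+s. ennreal (mix_density \<gamma> t s * exp (- \<beta> * s)) \<partial>lborel) =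
         ennreal (indicator {0<..} t * t powr (\<gamma> - 1) * exp (- ln (exp 1 + \<beta>) * t) / Gamma \<gamma>)"
proof (cases "t > 0")
  case False
  then show ?thesis by (simp add: mix_density_def)
next
  case t: True
  define C where "C = t powr (\<gamma> - 1) * rGamma t / Gamma \<gamma>"
  have C: "C \<ge> 0" using t g by (simp add: C_def rGamma_inverse_Gamma)
  have e\<beta>: "exp 1 + \<beta> > 0" using \<beta> by (simp add: add_pos_nonneg)
  have "exp (- (exp 1 + \<beta>) * s) = exp (- (exp 1 * s)) * exp (- \<beta> * s)" for s
    by (simp add: exp_add[symmetric] algebra_simps)
  then have "(\<lambda>s. ennreal (mix_density \<gamma> t s * exp (- \<beta> * s))) =
        (\<lambda>s. ennreal C * ennreal (indicator {0<..} s * s powr (t - 1) * exp (- (exp 1 + \<beta>) * s)))"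
    using t C by (auto simp: fun_eq_iff mix_density_def C_def ennreal_mult[symmetric] indicator_def mult_ac)
  then have "(\<integral>\<^sup>+s. ennreal (mix_density \<gamma> t s * exp (- \<beta> * s)) \<partial>lborel)
      = ennreal C * (\<integral>\<^sup>+s. ennreal (indicator {0<..} s * s powr (t - 1) * exp (- (exp 1 + \<beta>) * s)) \<partial>lborel)"
    by (simp only:) (rule nn_integral_cmult, measurable)
  also have "\<dots> = ennreal C * ennreal (Gamma t / (exp 1 + \<beta>) powr t)"
    using t e\<beta> by (simp only: nn_integral_powr_exp)
  also have "\<dots> = ennreal (t powr (\<gamma> - 1) * exp (- ln (exp 1 + \<beta>) * t) / Gamma \<gamma>)"
    using C t e\<beta> Gamma_real_pos[OF t, THEN less_imp_neq]
    by (simp add: ennreal_mult[symmetric] C_def rGamma_inverse_Gamma powr_def exp_minus field_simps)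
  finally show ?thesis using t by simp
qed

lemma nn_integral_mix_density_laplace:
  assumes g: "\<gamma> > 0" and \<beta>: "\<beta> \<ge> 0"
  shows "(\<integral>\<^sup>+t. \<integral>\<^sup>+s. ennreal (mix_density \<gamma> t s * exp (- \<beta> * s)) \<partial>lborel \<partial>lborel)
       = ennreal (ln (exp 1 + \<beta>) powr (- \<gamma>))"
proof -
  have L: "ln (exp 1 + \<beta>) > 0"
    using \<beta> by (intro ln_gt_zero) (smt (verit) one_less_exp_iff)
  have "(\<integral>\<^sup>+t. \<integral>\<^sup>+s. ennreal (mix_density \<gamma> t s * exp (- \<beta> * s)) \<partial>lborel \<partial>lborel)
      = (\<integral>\<^sup>+t. ennreal (inverse (Gamma \<gamma>)) *
           ennreal (indicator {0<..} t * t powr (\<gamma> - 1) * exp (- ln (exp 1 + \<beta>) * t)) \<partial>lborel)"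
    using Gamma_real_pos[OF g]
    by (intro nn_integral_cong, subst nn_integral_mix_density_exp[OF g \<beta>])
      (simp add: ennreal_mult'[symmetric] divide_inverse mult_ac)
  also have "\<dots> = ennreal (inverse (Gamma \<gamma>)) * ennreal (Gamma \<gamma> / ln (exp 1 + \<beta>) powr \<gamma>)"
    by (subst nn_integral_cmult) (measurable, simp only: nn_integral_powr_exp[OF L g])
  also have "\<dots> = ennreal (ln (exp 1 + \<beta>) powr (- \<gamma>))"
    using Gamma_real_pos[OF g] L by (simp add: ennreal_mult[symmetric] powr_minus_divide)
  finally show ?thesis .
qed

definition mix_cdf :: "real \<Rightarrow> real \<Rightarrow> real" where
  "mix_cdf \<gamma> u = enn2real (\<integral>\<^sup>+t. \<integral>\<^sup>+s. ennreal (mix_density \<gamma> t s * (if s \<le> u then 1 else 0)) \<partial>lborel \<partial>lborel)"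

lemma borel_measurable_mix_cdf [measurable]: "mix_cdf \<gamma> \<in> borel_measurable borel"
  unfolding mix_cdf_def by measurable

lemma mix_cdf_nonneg: "mix_cdf \<gamma> u \<ge> 0"
  by (simp add: mix_cdf_def)

lemma nn_integral_mix_density_atMost_le_1:
  assumes g: "\<gamma> > 0"
  shows "(\<integral>\<^sup>+t. \<integral>\<^sup>+s. ennreal (mix_density \<gamma> t s * (if s \<le> u then 1 else 0)) \<partial>lborel \<partial>lborel) \<le> 1"
proof -
  have "(\<integral>\<^sup>+t. \<integral>\<^sup>+s. ennreal (mix_density \<gamma> t s * (if s \<le> u then 1 else 0)) \<partial>lborel \<partial>lborel)
      \<le> (\<integral>\<^sup>+t. \<integral>\<^sup>+s. ennreal (mix_density \<gamma> t s * exp (- 0 * s)) \<partial>lborel \<partial>lborel)"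
    using mix_density_nonneg[OF g]
    by (intro nn_integral_mono ennreal_leI) (auto simp: indicator_def)
  also have "\<dots> = 1"
    using g by (simp only: nn_integral_mix_density_laplace) simp
  finally show ?thesis .
qed

lemma nn_integral_mix_cdf:
  assumes "\<gamma> > 0"
  shows "(\<integral>\<^sup>+t. \<integral>\<^sup>+s. ennreal (mix_density \<gamma> t s * (if s \<le> u then 1 else 0)) \<partial>lborel \<partial>lborel)
       = ennreal (mix_cdf \<gamma> u)"
  using neq_top_trans[OF ennreal_one_neq_top nn_integral_mix_density_atMost_le_1[OF assms, of u]]
  by (simp add: mix_cdf_def less_top)

lemma mix_cdf_le_1: "\<gamma> > 0 \<Longrightarrow> mix_cdf \<gamma> u \<le> 1"
  using nn_integral_mix_density_atMost_le_1[of \<gamma> u] nn_integral_mix_cdf[of \<gamma> u] by simp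

lemma nn_integral_exp_atLeast:
  assumes l: "l > (0::real)"
  shows "(\<integral>\<^sup>+u\<in>{s..}. ennreal (exp (- l * u)) \<partial>lborel) = ennreal (exp (- l * s) / l)"
proof -
  have "(\<integral>\<^sup>+u\<in>{s..}. ennreal (exp (- l * u)) \<partial>lborel) = ennreal (0 - (- exp (- l * s) / l))"
  proof (rule nn_integral_FTC_atLeast)
    show "((\<lambda>x. - exp (- l * x) / l) has_real_derivative exp (- l * x)) (at x)" for x
      using l by (auto intro!: derivative_eq_intros)
    show "((\<lambda>x. - exp (- l * x) / l) \<longlongrightarrow> 0) at_top"
      using l by real_asymp
  qed auto
  then show ?thesis by simp
qed

lemma nn_integral_mix_density_atMost_exp:
  assumes g: "\<gamma> > 0" and l: "l > (0::real)"
  shows "(\<integral>\<^sup>+u. ennreal (mix_density \<gamma> t s * (if s \<le> u then 1 else 0))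
           * ennreal (indicator {0..} u * exp (- l * u)) \<partial>lborel)
       = ennreal (mix_density \<gamma> t s * exp (- l * s)) * ennreal (1 / l)"
proof (cases "s > 0")
  case False
  then show ?thesis by (simp add: mix_density_def)
next
  case True
  have "(\<integral>\<^sup>+u. ennreal (mix_density \<gamma> t s * (if s \<le> u then 1 else 0))
        * ennreal (indicator {0..} u * exp (- l * u)) \<partial>lborel)
      = (\<integral>\<^sup>+u. ennreal (mix_density \<gamma> t s) * (ennreal (exp (- l * u)) * indicator {s..} u) \<partial>lborel)"
    using True by (intro nn_integral_cong)
      (auto simp: indicator_def ennreal_mult[symmetric] mix_density_nonneg[OF g])
  also have "\<dots> = ennreal (mix_density \<gamma> t s) * ennreal (exp (- l * s) / l)"
    by (subst nn_integral_cmult) (measurable, simp only: nn_integral_exp_atLeast[OF l])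
  finally show ?thesis
    using mix_density_nonneg[OF g] l by (simp add: ennreal_mult[symmetric])
qed

text \<open>Tonelli with the \<open>u\<close>-integral innermost; by the previous lemma this is the Laplace
  transform of the law of \<open>S\<close>, divided by \<open>l\<close>.\<close>
lemma has_bochner_integral_mix_cdf_exp:
  assumes g: "\<gamma> > 0" and l: "l > (0::real)"
  shows "has_bochner_integral lborel (\<lambda>u. mix_cdf \<gamma> u * (indicator {0..} u * exp (- l * u)))
           (ln (exp 1 + l) powr (- \<gamma>) / l)"
proof (rule has_bochner_integral_nn_integral)
  define E where "E = (\<lambda>u. ennreal (indicator {0..} u * exp (- l * u)))"
  define \<Phi> where "\<Phi> = (\<lambda>t s u. ennreal (mix_density \<gamma> t s * (if s \<le> u then 1 else 0)) * E u)"
  have [measurable]: "E \<in> borel_measurable borel"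
    unfolding E_def by measurable
  have [measurable]: "(\<lambda>x. \<Phi> (f x) (h x) (k x)) \<in> borel_measurable M"
    if [measurable]: "f \<in> borel_measurable M" "h \<in> borel_measurable M" "k \<in> borel_measurable M"
    for f h k and M :: "'a measure"
    unfolding \<Phi>_def by measurable
  have tail: "(\<integral>\<^sup>+u. \<Phi> t s u \<partial>lborel) = ennreal (mix_density \<gamma> t s * exp (- l * s)) * ennreal (1 / l)"
    for t s
    unfolding \<Phi>_def E_def by (rule nn_integral_mix_density_atMost_exp[OF g l])
  have "(\<integral>\<^sup>+u. ennreal (mix_cdf \<gamma> u) * E u \<partial>lborel) = (\<integral>\<^sup>+u. \<integral>\<^sup>+t. \<integral>\<^sup>+s. \<Phi> t s u \<partial>lborel \<partial>lborel \<partial>lborel)"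
    unfolding \<Phi>_def nn_integral_mix_cdf[OF g, symmetric]
    by (intro nn_integral_cong) (simp add: nn_integral_multc)
  also have "\<dots> = (\<integral>\<^sup>+t. \<integral>\<^sup>+s. \<integral>\<^sup>+u. \<Phi> t s u \<partial>lborel \<partial>lborel \<partial>lborel)"
    by (subst lborel_pair.Fubini', measurable, intro nn_integral_cong lborel_pair.Fubini', measurable)
  also have "\<dots> = (\<integral>\<^sup>+t. \<integral>\<^sup>+s. ennreal (mix_density \<gamma> t s * exp (- l * s)) \<partial>lborel \<partial>lborel) * ennreal (1 / l)"
    by (simp add: tail nn_integral_multc)
  also have "\<dots> = ennreal (ln (exp 1 + l) powr (- \<gamma>) / l)"
    using l by (subst nn_integral_mix_density_laplace[OF g]) (simp_all add: ennreal_mult[symmetric])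
  finally show "(\<integral>\<^sup>+u. ennreal (mix_cdf \<gamma> u * (indicator {0..} u * exp (- l * u))) \<partial>lborel)
      = ennreal (ln (exp 1 + l) powr (- \<gamma>) / l)"
    by (simp add: E_def ennreal_mult mix_cdf_nonneg)
  have "ln (exp 1 + l) > 0"
    using l by (intro ln_gt_zero) (smt (verit) one_less_exp_iff)
  then show "0 \<le> ln (exp 1 + l) powr - \<gamma> / l"
    using l by simp
qed (auto simp: mix_cdf_nonneg)

lemma Gamma_one_plus_le_1:
  assumes "0 \<le> t" "t \<le> (1::real)"
  shows "Gamma (1 + t) \<le> 1"
proof -
  have "(ln \<circ> Gamma) ((1 - t) *\<^sub>R 1 + t *\<^sub>R 2) \<le> (1 - t) * (ln \<circ> Gamma) 1 + t * (ln \<circ> Gamma) (2::real)"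
    using assms by (intro convex_onD[OF log_convex_Gamma_real]) auto
  moreover have "Gamma (2::real) = 1"
    using Gamma_plus1[of "1::real"] by simp
  ultimately have "ln (Gamma (1 + t)) \<le> 0"
    by (simp add: algebra_simps)
  moreover have "Gamma (1 + t) > 0"
    using assms by (intro Gamma_real_pos) simp
  ultimately show ?thesis by simp
qed

lemma rGamma_ge_self:
  assumes "0 < t" "t \<le> (1::real)"
  shows "t \<le> rGamma t"
proof -
  have "Gamma (1 + t) > 0"
    using assms by (intro Gamma_real_pos) simp
  then have "1 \<le> rGamma (1 + t)"
    using Gamma_one_plus_le_1[of t] assms by (simp add: rGamma_inverse_Gamma one_le_inverse)
  then have "t * 1 \<le> t * rGamma (1 + t)"
    using assms by (intro mult_left_mono) auto
  then show ?thesis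
    using rGamma_plus1[of t] by (simp add: add.commute)
qed

lemma nn_integral_powr_Ioc:
  assumes a: "a > -1" and c: "c \<ge> (0::real)"
  shows "(\<integral>\<^sup>+x. ennreal (indicator {0<..c} x * x powr a) \<partial>lborel) = ennreal (c powr (a + 1) / (a + 1))"
proof -
  have "(\<lambda>x. ennreal (indicator {0<..c} x * x powr a)) = (\<lambda>x. ennreal (x powr a) * indicator {0..c} x)"
    by (auto simp: fun_eq_iff indicator_def)
  then show ?thesis
    using nn_integral_has_integral_lebesgue'[OF _ has_integral_powr_from_0[OF a c]] by simp
qed

lemma mix_density_lower:
  assumes g: "\<gamma> > 0" and t: "0 < t" "t \<le> 1" and s: "0 < s" "s \<le> 1"
  shows "exp (- exp 1) / Gamma \<gamma> * t powr \<gamma> * s powr (t - 1) \<le> mix_density \<gamma> t s"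
proof -
  have "exp (- exp 1) / Gamma \<gamma> * t powr \<gamma> * s powr (t - 1)
      = t powr (\<gamma> - 1) / Gamma \<gamma> * s powr (t - 1) * (t * exp (- exp 1))"
    using t by (simp add: powr_diff field_simps)
  also have "\<dots> \<le> t powr (\<gamma> - 1) / Gamma \<gamma> * s powr (t - 1) * (rGamma t * exp (- (exp 1 * s)))"
    using g t s rGamma_ge_self[OF t] by (intro mult_left_mono mult_mono) auto
  also have "\<dots> = mix_density \<gamma> t s"
    using t s by (simp add: mix_density_def)
  finally show ?thesis .
qed

lemma nn_integral_mix_density_atMost_ge:
  assumes g: "\<gamma> > 0" and t: "0 < t" "t \<le> 1" and w: "0 < w" "w \<le> 1" "w \<le> v"
  shows "ennreal (exp (- exp 1) / Gamma \<gamma> * t powr (\<gamma> - 1) * w powr t)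
           \<le> (\<integral>\<^sup>+s. ennreal (mix_density \<gamma> t s * (if s \<le> v then 1 else 0)) \<partial>lborel)"
proof -
  define K where "K = exp (- exp 1) / Gamma \<gamma> * t powr \<gamma>"
  have K: "K > 0" using g t by (simp add: K_def)
  have "ennreal (exp (- exp 1) / Gamma \<gamma> * t powr (\<gamma> - 1) * w powr t) = ennreal K * ennreal (w powr t / t)"
    using g t w by (simp add: K_def ennreal_mult[symmetric] powr_diff)
  also have "\<dots> = ennreal K * (\<integral>\<^sup>+s. ennreal (indicator {0<..w} s * s powr (t - 1)) \<partial>lborel)"
    using nn_integral_powr_Ioc[of "t - 1" w] t w by simp
  also have "\<dots> = (\<integral>\<^sup>+s. ennreal (K * (indicator {0<..w} s * s powr (t - 1))) \<partial>lborel)"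
    using K by (subst nn_integral_cmult[symmetric]) (measurable, simp add: ennreal_mult)
  also have "\<dots> \<le> (\<integral>\<^sup>+s. ennreal (mix_density \<gamma> t s * (if s \<le> v then 1 else 0)) \<partial>lborel)"
    using t w mix_density_lower[OF g t] mix_density_nonneg[OF g]
    by (intro nn_integral_mono ennreal_leI) (auto simp: indicator_def K_def mult.assoc)
  finally show ?thesis .
qed

lemma exp_neg_1_le_min_powr:
  fixes v t :: real
  assumes v: "v > 0" and t: "0 < t" "t \<le> 1 / (2 * ln (exp 1 + 1 / v))"
  shows "exp (- 1) \<le> min v 1 powr t"
proof -
  define L where "L = ln (exp 1 + 1 / v)"
  have ev: "exp 1 \<le> exp 1 + 1 / v" using v by simp
  have ev_pos: "0 < exp 1 + 1 / v" using v by (intro add_pos_pos) auto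
  have "ln (exp 1) \<le> L"
    unfolding L_def using v ev_pos by (subst ln_le_cancel_iff) auto
  then have L: "1 \<le> L" by simp
  have "- L \<le> ln (min v 1)"
  proof (cases "v \<le> 1")
    case True
    have "ln (1 / v) \<le> L"
      unfolding L_def using v ev ev_pos by (subst ln_le_cancel_iff) auto
    then show ?thesis using True v by (simp add: ln_div)
  next
    case False
    then show ?thesis using L by simp
  qed
  then have "t * (- L) \<le> t * ln (min v 1)"
    using t by (intro mult_left_mono) auto
  moreover have "t * L \<le> 1"
    using t L mult_right_mono[OF t(2), of L] by (simp add: L_def)
  ultimately show ?thesis
    using v by (simp add: powr_def mult.commute)
qed

lemma mix_cdf_lower:
  assumes g: "\<gamma> > 0" and v: "v > 0"
  shows "exp (- exp 1 - 1) / (Gamma \<gamma> * \<gamma> * 2 powr \<gamma>) * ln (exp 1 + 1 / v) powr (- \<gamma>) \<le> mix_cdf \<gamma> v"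
proof -
  define L where "L = ln (exp 1 + 1 / v)"
  define \<delta> where "\<delta> = 1 / (2 * L)"
  define K where "K = exp (- exp 1) / Gamma \<gamma>"
  have "ln (exp 1) \<le> L"
    unfolding L_def using v by (subst ln_le_cancel_iff) (auto intro: add_pos_pos)
  then have L: "1 \<le> L" by simp
  have \<delta>: "0 < \<delta>" "\<delta> \<le> 1" using L by (auto simp: \<delta>_def)
  have K: "K > 0" using g by (simp add: K_def)
  have "exp (- exp 1 - 1) / (Gamma \<gamma> * \<gamma> * 2 powr \<gamma>) * L powr (- \<gamma>)
      = K * exp (- 1) * (\<delta> powr (\<gamma> - 1 + 1) / (\<gamma> - 1 + 1))"
    using g L by (simp add: K_def \<delta>_def exp_diff exp_minus powr_minus_divide powr_divide powr_mult field_simps)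
  also have "ennreal \<dots> = (\<integral>\<^sup>+t. ennreal (K * exp (- 1)) * ennreal (indicator {0<..\<delta>} t * t powr (\<gamma> - 1)) \<partial>lborel)"
    using g \<delta> K by (subst nn_integral_cmult)
      (measurable, simp only: nn_integral_powr_Ioc, simp_all add: ennreal_mult'[symmetric])
  also have "\<dots> \<le> (\<integral>\<^sup>+t. \<integral>\<^sup>+s. ennreal (mix_density \<gamma> t s * (if s \<le> v then 1 else 0)) \<partial>lborel \<partial>lborel)"
  proof (intro nn_integral_mono)
    fix t
    show "ennreal (K * exp (- 1)) * ennreal (indicator {0<..\<delta>} t * t powr (\<gamma> - 1))
        \<le> (\<integral>\<^sup>+s. ennreal (mix_density \<gamma> t s * (if s \<le> v then 1 else 0)) \<partial>lborel)"
    proof (cases "t \<in> {0<..\<delta>}")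
      case True
      then have "K * exp (- 1) * t powr (\<gamma> - 1) \<le> K * t powr (\<gamma> - 1) * min v 1 powr t"
        using K exp_neg_1_le_min_powr[OF v, of t] unfolding \<delta>_def L_def
        by (simp add: mult_left_mono mult.commute mult.left_commute)
      then have "ennreal (K * exp (- 1)) * ennreal (indicator {0<..\<delta>} t * t powr (\<gamma> - 1))
          \<le> ennreal (K * t powr (\<gamma> - 1) * min v 1 powr t)"
        using True K by (simp add: ennreal_mult[symmetric] ennreal_leI)
      also have "\<dots> \<le> (\<integral>\<^sup>+s. ennreal (mix_density \<gamma> t s * (if s \<le> v then 1 else 0)) \<partial>lborel)"
        using True \<delta> v unfolding K_def by (intro nn_integral_mix_density_atMost_ge g) auto
      finally show ?thesis .
    qed simp
  qed
  also have "\<dots> = ennreal (mix_cdf \<gamma> v)"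
    by (rule nn_integral_mix_cdf[OF g])
  finally show ?thesis
    using mix_cdf_nonneg by (simp add: L_def)
qed

lemma symb12_eq_integral_mix_cdf:
  assumes g: "\<gamma> > 0"
  shows "symb12 \<gamma> k * exp (- \<epsilon> * (norm k)\<^sup>2)
       = (LINT u|lborel. mix_cdf \<gamma> u * indicator {0..} u * (- (fst k * snd k) * exp (- (u + \<epsilon>) * (norm k)\<^sup>2)))"
proof (cases "k = 0")
  case True
  then show ?thesis by (simp add: symb12_def)
next
  case False
  define l where "l = (norm k)\<^sup>2"
  have l: "l > 0" using False by (simp add: l_def)
  have "(LINT u|lborel. mix_cdf \<gamma> u * indicator {0..} u * (- (fst k * snd k) * exp (- (u + \<epsilon>) * (norm k)\<^sup>2)))
      = (LINT u|lborel. (- (fst k * snd k) * exp (- \<epsilon> * l)) * (mix_cdf \<gamma> u * (indicator {0..} u * exp (- l * u))))"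
    by (intro Bochner_Integration.integral_cong) (auto simp: l_def algebra_simps exp_add[symmetric])
  also have "\<dots> = (- (fst k * snd k) * exp (- \<epsilon> * l)) * (ln (exp 1 + l) powr (- \<gamma>) / l)"
    using has_bochner_integral_mix_cdf_exp[OF g l] by (simp add: has_bochner_integral_iff)
  finally show ?thesis
    by (simp add: symb12_def l_def)
qed

lemma integrable_indicator_atLeast_0_div_square:
  assumes e: "e > (0::real)"
  shows "integrable lborel (\<lambda>u. indicator {0..} u / (u + e)\<^sup>2)"
proof (rule integrableI_nn_integral_finite)
  have "(\<integral>\<^sup>+u. ennreal (indicator {0..} u / (u + e)\<^sup>2) \<partial>lborel) = (\<integral>\<^sup>+u\<in>{0..}. ennreal (1 / (u + e)\<^sup>2) \<partial>lborel)"
    by (intro nn_integral_cong) (auto simp: indicator_def)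
  also have "\<dots> = ennreal (0 - (- 1 / (0 + e)))"
  proof (rule nn_integral_FTC_atLeast)
    show "((\<lambda>x. - 1 / (x + e)) has_real_derivative 1 / (x + e)\<^sup>2) (at x)" if "0 \<le> x" for x
      using that e by (auto intro!: derivative_eq_intros simp: field_simps power2_eq_square)
    show "((\<lambda>x. - 1 / (x + e)) \<longlongrightarrow> 0) at_top" by real_asymp
  qed auto
  finally show "(\<integral>\<^sup>+u. ennreal (indicator {0..} u / (u + e)\<^sup>2) \<partial>lborel) = ennreal (1 / e)" by simp
qed (auto simp: indicator_def)

lemma has_bochner_integral_mix_cdf_k1k2_gaussian_cis:
  fixes \<gamma> u \<epsilon> :: real and x :: "real \<times> real"
  assumes e: "\<epsilon> > 0"
  defines "f \<equiv> \<lambda>k. complex_of_real (mix_cdf \<gamma> u * indicator {0..} u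
      * (- (fst k * snd k) * exp (- (u + \<epsilon>) * (norm k)\<^sup>2))) * cis (k \<bullet> x)"
  shows "has_bochner_integral lborel f (of_real (mix_cdf \<gamma> u * indicator {0..} u * heat_d12 x (u + \<epsilon>)))"
    and "has_bochner_integral lborel (\<lambda>k. norm (f k)) (mix_cdf \<gamma> u * indicator {0..} u / (u + \<epsilon>)\<^sup>2)"
proof -
  consider "u < 0" | "u \<ge> 0" "u + \<epsilon> > 0" using e by linarith
  then have "has_bochner_integral lborel f (of_real (mix_cdf \<gamma> u * indicator {0..} u * heat_d12 x (u + \<epsilon>)))
      \<and> has_bochner_integral lborel (\<lambda>k. norm (f k)) (mix_cdf \<gamma> u * indicator {0..} u / (u + \<epsilon>)\<^sup>2)"
  proof cases
    case 2
    have "f = (\<lambda>k. of_real (mix_cdf \<gamma> u)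
        * (complex_of_real (- (fst k * snd k) * exp (- (u + \<epsilon>) * (norm k)\<^sup>2)) * cis (k \<bullet> x)))"
      using 2 by (simp add: f_def fun_eq_iff mult_ac)
    moreover have "(\<lambda>k. norm (f k)) = (\<lambda>k. mix_cdf \<gamma> u * (\<bar>fst k * snd k\<bar> * exp (- (u + \<epsilon>) * (norm k)\<^sup>2)))"
      using 2 by (simp add: f_def fun_eq_iff norm_mult mix_cdf_nonneg abs_mult)
    ultimately show ?thesis
      using 2 has_bochner_integral_mult_right[OF has_bochner_integral_k1k2_gaussian_cis[OF 2(2)]]
        has_bochner_integral_mult_right[OF has_bochner_integral_abs_k1k2_gaussian[OF 2(2)]]
      by simp
  qed (simp add: f_def has_bochner_integral_zero)
  then show "has_bochner_integral lborel f (of_real (mix_cdf \<gamma> u * indicator {0..} u * heat_d12 x (u + \<epsilon>)))"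
    and "has_bochner_integral lborel (\<lambda>k. norm (f k)) (mix_cdf \<gamma> u * indicator {0..} u / (u + \<epsilon>)\<^sup>2)"
    by auto
qed

lemma K12_reg_eq_integral_heat_d12:
  assumes g: "\<gamma> > 0" and e: "\<epsilon> > 0"
  shows "K12_reg \<gamma> \<epsilon> x = complex_of_real
           (1 / (2 * pi)\<^sup>2 * (LINT u|lborel. mix_cdf \<gamma> u * indicator {0..} u * heat_d12 x (u + \<epsilon>)))"
proof -
  define \<Phi> where "\<Phi> = (\<lambda>u (k::real \<times> real). complex_of_real (mix_cdf \<gamma> u * indicator {0..} u
      * (- (fst k * snd k) * exp (- (u + \<epsilon>) * (norm k)\<^sup>2))) * cis (k \<bullet> x))"
  have [measurable]: "(\<lambda>(u, k). \<Phi> u k) \<in> borel_measurable (lborel \<Otimes>\<^sub>M lborel)"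
    unfolding \<Phi>_def by measurable
  have \<Phi>_u: "has_bochner_integral lborel (\<Phi> u) (of_real (mix_cdf \<gamma> u * indicator {0..} u * heat_d12 x (u + \<epsilon>)))"
    "has_bochner_integral lborel (\<lambda>k. norm (\<Phi> u k)) (mix_cdf \<gamma> u * indicator {0..} u / (u + \<epsilon>)\<^sup>2)" for u
    unfolding \<Phi>_def by (rule has_bochner_integral_mix_cdf_k1k2_gaussian_cis[OF e])+
  have int: "integrable (lborel \<Otimes>\<^sub>M lborel) (\<lambda>(u, k). \<Phi> u k)"
  proof (rule lborel_pair.Fubini_integrable)
    have "integrable lborel (\<lambda>u. mix_cdf \<gamma> u * indicator {0..} u / (u + \<epsilon>)\<^sup>2)"
    proof (rule Bochner_Integration.integrable_bound[OF integrable_indicator_atLeast_0_div_square[OF e]])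
      show "AE u in lborel. norm (mix_cdf \<gamma> u * indicator {0..} u / (u + \<epsilon>)\<^sup>2) \<le> norm (indicator {0..} u / (u + \<epsilon>)\<^sup>2 :: real)"
        using mix_cdf_le_1[OF g] mix_cdf_nonneg by (auto simp: indicator_def divide_right_mono)
    qed measurable
    then show "integrable lborel (\<lambda>u. \<integral>k. norm (case (u, k) of (u, k) \<Rightarrow> \<Phi> u k) \<partial>lborel)"
      using \<Phi>_u(2) by (simp add: has_bochner_integral_iff)
  qed (use \<Phi>_u(1) in \<open>auto simp: \<Phi>_def has_bochner_integral_iff\<close>)
  have "(\<integral>k. complex_of_real (symb12 \<gamma> k * exp (- \<epsilon> * (norm k)\<^sup>2)) * cis (k \<bullet> x) \<partial>lborel)
      = (\<integral>k. (\<integral>u. \<Phi> u k \<partial>lborel) \<partial>lborel)"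
    unfolding symb12_eq_integral_mix_cdf[OF g] \<Phi>_def
    by (simp only: integral_mult_left_zero integral_complex_of_real)
  also have "\<dots> = (\<integral>u. (\<integral>k. \<Phi> u k \<partial>lborel) \<partial>lborel)"
    using int by (intro lborel_pair.Fubini_integral) simp
  also have "\<dots> = (\<integral>u. complex_of_real (mix_cdf \<gamma> u * indicator {0..} u * heat_d12 x (u + \<epsilon>)) \<partial>lborel)"
    using \<Phi>_u(1) by (simp add: has_bochner_integral_iff)
  finally show ?thesis
    unfolding K12_reg_def integral_complex_of_real by simp
qed

lemma integral_dominated_convergence_at_right_0:
  fixes s :: "real \<Rightarrow> 'a \<Rightarrow> 'b::{banach, second_countable_topology}"
  assumes "f \<in> borel_measurable M" "\<And>t. s t \<in> borel_measurable M" "integrable M w"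
    and "AE x in M. ((\<lambda>t. s t x) \<longlongrightarrow> f x) (at_right 0)"
    and "\<forall>\<^sub>F t in at_right 0. AE x in M. norm (s t x) \<le> w x"
  shows "((\<lambda>t. integral\<^sup>L M (s t)) \<longlongrightarrow> integral\<^sup>L M f) (at_right 0)"
  using assms unfolding filterlim_at_right_to_top eventually_at_right_to_top
  by (intro integral_dominated_convergence_at_top[where w = w]) auto

lemma exp_neg_div_div_cube_le:
  assumes b: "b > (0::real)" and a: "a > 0"
  shows "exp (- b / a) / a ^ 3 \<le> 27 / b ^ 3"
proof -
  define z where "z = b / a"
  have z: "z > 0" using a b by (simp add: z_def)
  have "z / 3 \<le> exp (z / 3)"
    using exp_ge_add_one_self[of "z / 3"] by linarith
  then have "(z / 3) ^ 3 \<le> exp (z / 3) ^ 3"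
    using z by (intro power_mono) auto
  also have "exp (z / 3) ^ 3 = exp z"
    by (simp add: exp_of_nat_mult[symmetric])
  finally have "z ^ 3 / 27 \<le> exp z"
    by (simp add: power_divide)
  have "exp (- b / a) = 1 / exp z"
    by (simp add: z_def exp_minus field_simps)
  also have "\<dots> \<le> 1 / (z ^ 3 / 27)"
    using z \<open>z ^ 3 / 27 \<le> exp z\<close> by (intro divide_left_mono) auto
  finally have "exp (- b / a) / a ^ 3 \<le> 27 / z ^ 3 / a ^ 3"
    using a by (intro divide_right_mono) auto
  also have "27 / z ^ 3 / a ^ 3 = 27 / b ^ 3"
    using a by (simp add: z_def power_divide)
  finally show ?thesis .
qed

lemma integrable_indicator_atLeast_div_cube:
  assumes e: "e > (0::real)"
  shows "integrable lborel (\<lambda>u. indicator {e..} u / u ^ 3)"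
proof (rule integrableI_nn_integral_finite)
  have "(\<integral>\<^sup>+u. ennreal (indicator {e..} u / u ^ 3) \<partial>lborel) = (\<integral>\<^sup>+u\<in>{e..}. ennreal (1 / u ^ 3) \<partial>lborel)"
    by (intro nn_integral_cong) (auto simp: indicator_def)
  also have "\<dots> = ennreal (0 - (- 1 / (2 * e\<^sup>2)))"
  proof (rule nn_integral_FTC_atLeast)
    show "((\<lambda>x. - 1 / (2 * x\<^sup>2)) has_real_derivative 1 / x ^ 3) (at x)" if "e \<le> x" for x
      using that e by (auto intro!: derivative_eq_intros simp: field_simps power2_eq_square power3_eq_cube)
    show "((\<lambda>x::real. - 1 / (2 * x\<^sup>2)) \<longlongrightarrow> 0) at_top" by real_asymp
  qed (use e in auto)
  finally show "(\<integral>\<^sup>+u. ennreal (indicator {e..} u / u ^ 3) \<partial>lborel) = ennreal (1 / (2 * e\<^sup>2))"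
    by simp
qed (use e in \<open>auto simp: indicator_def\<close>)

text \<open>The Gaussian factor tames the singularity of \<open>heat_d12 x a\<close> at \<open>a = 0\<close>, and \<open>a ^ (-3)\<close> is
  integrable at infinity.\<close>
lemma heat_d12_dominated:
  assumes "fst x > 0" "snd x > 0"
  obtains w where "integrable lborel w" "\<And>u. 0 \<le> w u"
    and "\<And>u a. 0 \<le> u \<Longrightarrow> u \<le> a \<Longrightarrow> 0 < a \<Longrightarrow> heat_d12 x a \<le> w u"
proof
  define c where "c = pi * fst x * snd x / 4"
  define \<beta> where "\<beta> = (norm x)\<^sup>2 / 4"
  have c: "c > 0" using assms by (simp add: c_def)
  have \<beta>: "\<beta> > 0" using assms by (auto simp: \<beta>_def)
  define w where "w u = c * 27 / \<beta> ^ 3 * indicator {0..1} u + c * (indicator {1..} u / u ^ 3)" for u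
  show "integrable lborel w"
    unfolding w_def
    by (intro Bochner_Integration.integrable_add integrable_mult_right integrable_mult_left
        integrable_real_indicator integrable_indicator_atLeast_div_cube) auto
  show "0 \<le> w u" for u
    using c \<beta> by (simp add: w_def indicator_def)
  show "heat_d12 x a \<le> w u" if u: "0 \<le> u" "u \<le> a" "0 < a" for u a
  proof (cases "u \<le> 1")
    case True
    have "heat_d12 x a \<le> c * (27 / \<beta> ^ 3)"
      unfolding heat_d12_eq c_def[symmetric] \<beta>_def[symmetric]
      using exp_neg_div_div_cube_le[OF \<beta> u(3)] c by (intro mult_left_mono) auto
    then show ?thesis using True u c by (simp add: w_def indicator_def)
  next
    case False
    have "exp (- \<beta> / a) / a ^ 3 \<le> 1 / u ^ 3"
      using False u \<beta> by (intro frac_le power_mono) auto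
    then have "heat_d12 x a \<le> c * (1 / u ^ 3)"
      unfolding heat_d12_eq c_def[symmetric] \<beta>_def[symmetric] using c by (intro mult_left_mono) auto
    then show ?thesis using False by (simp add: w_def)
  qed
qed

lemma mix_cdf_heat_d12_dominated:
  assumes g: "\<gamma> > 0" and x: "fst x > 0" "snd x > 0"
  obtains w where "integrable lborel w"
    and "\<And>u a. u \<le> a \<Longrightarrow> 0 < a \<Longrightarrow> norm (mix_cdf \<gamma> u * indicator {0..} u * heat_d12 x a) \<le> w u"
proof -
  obtain w where w: "integrable lborel w" "\<And>u. 0 \<le> w u"
    and bound: "\<And>u a. 0 \<le> u \<Longrightarrow> u \<le> a \<Longrightarrow> 0 < a \<Longrightarrow> heat_d12 x a \<le> w u"
    using heat_d12_dominated[OF x] by blast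
  have "norm (mix_cdf \<gamma> u * indicator {0..} u * heat_d12 x a) \<le> w u" if "u \<le> a" "0 < a" for u a
  proof (cases "0 \<le> u")
    case True
    have "heat_d12 x a \<ge> 0" using x that by (intro heat_d12_nonneg) auto
    then have "norm (mix_cdf \<gamma> u * indicator {0..} u * heat_d12 x a) = mix_cdf \<gamma> u * heat_d12 x a"
      using True by (simp add: mix_cdf_nonneg)
    also have "\<dots> \<le> heat_d12 x a"
      using \<open>heat_d12 x a \<ge> 0\<close> mix_cdf_le_1[OF g] by (simp add: mult_left_le_one_le mix_cdf_nonneg)
    also have "\<dots> \<le> w u"
      using True that by (intro bound)
    finally show ?thesis .
  qed (simp add: w(2))
  with w(1) show ?thesis by (rule that)
qed

lemma integrable_mix_cdf_heat_d12:
  assumes g: "\<gamma> > 0" and x: "fst x > 0" "snd x > 0"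
  shows "integrable lborel (\<lambda>u. mix_cdf \<gamma> u * indicator {0..} u * heat_d12 x u)"
proof -
  obtain w where w: "integrable lborel w"
    and dom: "\<And>u a. u \<le> a \<Longrightarrow> 0 < a \<Longrightarrow> norm (mix_cdf \<gamma> u * indicator {0..} u * heat_d12 x a) \<le> w u"
    using mix_cdf_heat_d12_dominated[OF g x] by blast
  show ?thesis
  proof (rule Bochner_Integration.integrable_bound[OF w])
    show "AE u in lborel. norm (mix_cdf \<gamma> u * indicator {0..} u * heat_d12 x u) \<le> norm (w u)"
      using AE_lborel_singleton[of 0]
    proof eventually_elim
      case (elim u)
      then show ?case
        using dom[of u u] dom[of u 1] by (cases "0 < u") (auto simp: indicator_def)
    qed
  qed measurable
qed

lemma tendsto_integral_mix_cdf_heat_d12: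
  assumes g: "\<gamma> > 0" and x: "fst x > 0" "snd x > 0"
  shows "((\<lambda>\<epsilon>. LINT u|lborel. mix_cdf \<gamma> u * indicator {0..} u * heat_d12 x (u + \<epsilon>))
           \<longlongrightarrow> (LINT u|lborel. mix_cdf \<gamma> u * indicator {0..} u * heat_d12 x u)) (at_right 0)"
proof -
  obtain w where w: "integrable lborel w"
    and dom: "\<And>u a. u \<le> a \<Longrightarrow> 0 < a \<Longrightarrow> norm (mix_cdf \<gamma> u * indicator {0..} u * heat_d12 x a) \<le> w u"
    using mix_cdf_heat_d12_dominated[OF g x] by blast
  show ?thesis
  proof (rule integral_dominated_convergence_at_right_0[OF _ _ w])
    show "AE u in lborel. ((\<lambda>\<epsilon>. mix_cdf \<gamma> u * indicator {0..} u * heat_d12 x (u + \<epsilon>))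
        \<longlongrightarrow> mix_cdf \<gamma> u * indicator {0..} u * heat_d12 x u) (at_right 0)"
      using AE_lborel_singleton[of 0]
    proof eventually_elim
      case (elim u)
      show ?case
      proof (cases "u > 0")
        case True
        then have "isCont (\<lambda>\<epsilon>. heat_d12 x (u + \<epsilon>)) 0"
          unfolding heat_d12_def by (intro continuous_intros) auto
        then have "((\<lambda>\<epsilon>. heat_d12 x (u + \<epsilon>)) \<longlongrightarrow> heat_d12 x (u + 0)) (at_right 0)"
          unfolding isCont_def by (rule tendsto_mono[OF at_le[OF subset_UNIV]])
        then show ?thesis by (simp add: tendsto_mult_left)
      qed (use elim in simp)
    qed
    show "\<forall>\<^sub>F \<epsilon> in at_right 0. AE u in lborel.
        norm (mix_cdf \<gamma> u * indicator {0..} u * heat_d12 x (u + \<epsilon>)) \<le> w u"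
      using eventually_at_right_less[of "0::real"]
    proof eventually_elim
      case (elim \<epsilon>)
      show ?case
      proof (rule AE_I2)
        show "norm (mix_cdf \<gamma> u * indicator {0..} u * heat_d12 x (u + \<epsilon>)) \<le> w u" for u
          using dom[of u "u + \<epsilon>"] dom[of u 1] elim by (cases "0 \<le> u") (auto simp: indicator_def)
      qed
    qed
  qed measurable
qed

lemma ln_exp1_plus_inverse_le:
  assumes r: "r > (0::real)" and u: "r\<^sup>2 \<le> u"
  shows "ln (exp 1 + 1 / u) \<le> 2 * ln (exp 1 + 1 / r)"
proof -
  have u0: "u > 0" using u zero_less_power[OF r, of 2] by linarith
  have pos: "0 < exp 1 + 1 / r" using r by (intro add_pos_pos) auto
  have "ln (exp 1 + 1 / u) \<le> ln (exp 1 + 1 / r\<^sup>2)"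
    using u0 r u by (subst ln_le_cancel_iff) (auto intro!: add_pos_pos divide_left_mono)
  also have "\<dots> \<le> ln ((exp 1 + 1 / r)\<^sup>2)"
  proof (subst ln_le_cancel_iff)
    have "exp 1 \<le> exp 1 * exp (1::real)" by simp
    moreover have "0 \<le> 2 * exp 1 / r" using r by simp
    moreover have "(exp 1 + 1 / r)\<^sup>2 = exp 1 * exp 1 + 2 * exp 1 / r + 1 / r\<^sup>2"
      using r by (simp add: power2_eq_square field_simps)
    ultimately show "exp 1 + 1 / r\<^sup>2 \<le> (exp 1 + 1 / r)\<^sup>2"
      by linarith
  qed (use r pos in \<open>auto intro: add_pos_pos\<close>)
  also have "\<dots> = 2 * ln (exp 1 + 1 / r)"
    using pos by (simp add: ln_realpow)
  finally show ?thesis .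
qed

lemma heat_d12_lower:
  assumes x: "fst x > 0" "snd x > 0" and u: "(norm x)\<^sup>2 \<le> u" "u \<le> 2 * (norm x)\<^sup>2"
  shows "pi * fst x * snd x / 4 * (exp (- 1 / 4) / (8 * norm x ^ 6)) \<le> heat_d12 x u"
proof -
  have r: "norm x > 0" using x by (auto simp: zero_prod_def)
  have u0: "u > 0" using u r by (smt (verit) zero_less_power)
  have "u ^ 3 \<le> (2 * (norm x)\<^sup>2) ^ 3"
    using u u0 by (intro power_mono) auto
  then have "u ^ 3 \<le> 8 * norm x ^ 6"
    by (simp add: power_mult_distrib power_mult[symmetric])
  moreover have "exp (- 1 / 4) \<le> exp (- ((norm x)\<^sup>2 / 4) / u)"
    using u u0 by (auto simp: field_simps)
  ultimately have "exp (- 1 / 4) / (8 * norm x ^ 6) \<le> exp (- ((norm x)\<^sup>2 / 4) / u) / u ^ 3"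
    using u0 by (intro frac_le) auto
  then show ?thesis
    unfolding heat_d12_eq using x by (intro mult_left_mono) auto
qed

lemma lborel_integral_ge_Icc:
  fixes f :: "real \<Rightarrow> real"
  assumes f: "integrable lborel f" "\<And>u. 0 \<le> f u" and c: "\<And>u. a \<le> u \<Longrightarrow> u \<le> b \<Longrightarrow> c \<le> f u"
    and ab: "a \<le> b"
  shows "(b - a) * c \<le> integral\<^sup>L lborel f"
proof -
  have "(b - a) * c = measure lborel {a..b} * c"
    using ab by simp
  also have "\<dots> = (LINT u|lborel. indicator {a..b} u * c)"
    using ab by (intro has_bochner_integral_integral_eq[symmetric] has_bochner_integral_mult_left
        has_bochner_integral_real_indicator) (auto simp: emeasure_lborel_Icc)
  also have "\<dots> \<le> integral\<^sup>L lborel f"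
    using f c ab
    by (intro integral_mono integrable_mult_left integrable_real_indicator)
      (auto simp: indicator_def emeasure_lborel_Icc)
  finally show ?thesis .
qed

lemma mix_cdf_heat_d12_lower:
  assumes g: "\<gamma> > 0" and x: "fst x > 0" "snd x > 0"
    and u: "(norm x)\<^sup>2 \<le> u" "u \<le> 2 * (norm x)\<^sup>2"
  shows "exp (- exp 1 - 1) / (Gamma \<gamma> * \<gamma> * 2 powr \<gamma>) * (2 powr (- \<gamma>) * ln (exp 1 + 1 / norm x) powr (- \<gamma>))
           * (pi * fst x * snd x / 4 * (exp (- 1 / 4) / (8 * norm x ^ 6)))
         \<le> mix_cdf \<gamma> u * indicator {0..} u * heat_d12 x u"
proof -
  define c0 where "c0 = exp (- exp 1 - 1) / (Gamma \<gamma> * \<gamma> * 2 powr \<gamma>)"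
  define L where "L = ln (exp 1 + 1 / norm x)"
  have r: "norm x > 0" using x by (auto simp: zero_prod_def)
  have u0: "u > 0" using u r by (smt (verit) zero_less_power)
  have c0: "c0 > 0" using g by (simp add: c0_def)
  have "ln (exp 1) \<le> L"
    unfolding L_def using r by (subst ln_le_cancel_iff) (auto intro: add_pos_pos)
  then have L: "L \<ge> 1" by simp
  have "ln (exp 1 + 1 / u) > 0"
    using u0 by (intro ln_gt_zero) (smt (verit) divide_pos_pos one_less_exp_iff)
  then have "(2 * L) powr (- \<gamma>) \<le> ln (exp 1 + 1 / u) powr (- \<gamma>)"
    using ln_exp1_plus_inverse_le[OF r u(1)] g unfolding L_def by (intro powr_mono2') auto
  moreover have "(2 * L) powr (- \<gamma>) = 2 powr (- \<gamma>) * L powr (- \<gamma>)"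
    using L by (simp add: powr_mult)
  ultimately have "c0 * (2 powr (- \<gamma>) * L powr (- \<gamma>)) \<le> c0 * ln (exp 1 + 1 / u) powr (- \<gamma>)"
    using c0 by (simp add: mult_left_mono)
  also have "\<dots> \<le> mix_cdf \<gamma> u"
    using mix_cdf_lower[OF g u0] unfolding c0_def .
  finally have "c0 * (2 powr (- \<gamma>) * L powr (- \<gamma>)) \<le> mix_cdf \<gamma> u" .
  then have "c0 * (2 powr (- \<gamma>) * L powr (- \<gamma>)) * (pi * fst x * snd x / 4 * (exp (- 1 / 4) / (8 * norm x ^ 6)))
      \<le> mix_cdf \<gamma> u * heat_d12 x u"
    using heat_d12_lower[OF x u] x r by (intro mult_mono) (auto simp: mix_cdf_nonneg)
  then show ?thesis
    using u0 by (simp add: c0_def L_def)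
qed

definition K12 :: "real \<Rightarrow> real \<times> real \<Rightarrow> real" where
  "K12 \<gamma> x = 1 / (2 * pi)\<^sup>2 * (LINT u|lborel. mix_cdf \<gamma> u * indicator {0..} u * heat_d12 x u)"

lemma tendsto_K12_reg:
  assumes g: "\<gamma> > 0" and x: "fst x > 0" "snd x > 0"
  shows "((\<lambda>\<epsilon>. K12_reg \<gamma> \<epsilon> x) \<longlongrightarrow> complex_of_real (K12 \<gamma> x)) (at_right 0)"
proof (rule Lim_transform_eventually)
  show "((\<lambda>\<epsilon>. complex_of_real (1 / (2 * pi)\<^sup>2
      * (LINT u|lborel. mix_cdf \<gamma> u * indicator {0..} u * heat_d12 x (u + \<epsilon>))))
      \<longlongrightarrow> complex_of_real (K12 \<gamma> x)) (at_right 0)"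
    unfolding K12_def by (intro tendsto_of_real tendsto_mult tendsto_const tendsto_integral_mix_cdf_heat_d12 g x)
  show "\<forall>\<^sub>F \<epsilon> in at_right 0. complex_of_real (1 / (2 * pi)\<^sup>2
      * (LINT u|lborel. mix_cdf \<gamma> u * indicator {0..} u * heat_d12 x (u + \<epsilon>))) = K12_reg \<gamma> \<epsilon> x"
    using eventually_at_right_less[of "0::real"]
    by eventually_elim (simp add: K12_reg_eq_integral_heat_d12[OF g])
qed

lemma K12_lower:
  assumes g: "\<gamma> > 0" and x: "fst x > 0" "snd x > 0"
  shows "exp (- exp 1 - 1) / (Gamma \<gamma> * \<gamma> * 2 powr \<gamma>) * 2 powr (- \<gamma>) * exp (- 1 / 4) / (128 * pi)
           * fst x * snd x / (norm x) ^ 4 * ln (exp 1 + 1 / norm x) powr (- \<gamma>) \<le> K12 \<gamma> x"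
proof -
  define r where "r = norm x"
  have r: "r > 0" using x by (auto simp: r_def zero_prod_def)
  define P where "P = exp (- exp 1 - 1) / (Gamma \<gamma> * \<gamma> * 2 powr \<gamma>)
      * (2 powr (- \<gamma>) * ln (exp 1 + 1 / r) powr (- \<gamma>)) * (pi * fst x * snd x / 4 * (exp (- 1 / 4) / (8 * r ^ 6)))"
  have "exp (- exp 1 - 1) / (Gamma \<gamma> * \<gamma> * 2 powr \<gamma>) * 2 powr (- \<gamma>) * exp (- 1 / 4) / (128 * pi)
      * fst x * snd x / r ^ 4 * ln (exp 1 + 1 / r) powr (- \<gamma>) = 1 / (2 * pi)\<^sup>2 * ((2 * r\<^sup>2 - r\<^sup>2) * P)"
    using r by (simp add: P_def field_simps power2_eq_square eval_nat_numeral)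
  also have "\<dots> \<le> K12 \<gamma> x"
    unfolding K12_def
  proof (intro mult_left_mono lborel_integral_ge_Icc integrable_mix_cdf_heat_d12 g x)
    show "0 \<le> mix_cdf \<gamma> u * indicator {0..} u * heat_d12 x u" for u
      using x by (simp add: mix_cdf_nonneg heat_d12_nonneg indicator_def)
    show "P \<le> mix_cdf \<gamma> u * indicator {0..} u * heat_d12 x u" if "r\<^sup>2 \<le> u" "u \<le> 2 * r\<^sup>2" for u
      using mix_cdf_heat_d12_lower[OF g x] that unfolding P_def r_def by blast
  qed auto
  finally show ?thesis
    unfolding r_def .
qed

theorem lemma3p1:
  fixes \<gamma> :: real
  assumes "\<gamma> > 0"
  shows "\<exists>C>0. \<forall>x1 x2 :: real. x1 > 0 \<longrightarrow> x2 > 0 \<longrightarrow>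
           (\<exists>K :: real.
              ((\<lambda>\<epsilon>. K12_reg \<gamma> \<epsilon> (x1, x2)) \<longlongrightarrow> complex_of_real K) (at_right 0) \<and>
              K \<ge> C * x1 * x2 / (norm (x1, x2))^4
                   * (ln (exp 1 + 1 / norm (x1, x2))) powr (- \<gamma>)
                   * exp (- ((norm (x1, x2))^2)))"
proof -
  define C where "C = exp (- exp 1 - 1) / (Gamma \<gamma> * \<gamma> * 2 powr \<gamma>) * 2 powr (- \<gamma>) * exp (- 1 / 4) / (128 * pi)"
  have "((\<lambda>\<epsilon>. K12_reg \<gamma> \<epsilon> (x1, x2)) \<longlongrightarrow> complex_of_real (K12 \<gamma> (x1, x2))) (at_right 0) \<and>
      K12 \<gamma> (x1, x2) \<ge> C * x1 * x2 / (norm (x1, x2))^4 * (ln (exp 1 + 1 / norm (x1, x2))) powr (- \<gamma>)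
        * exp (- ((norm (x1, x2))^2))"
    if x: "x1 > 0" "x2 > 0" for x1 x2
  proof
    show "((\<lambda>\<epsilon>. K12_reg \<gamma> \<epsilon> (x1, x2)) \<longlongrightarrow> complex_of_real (K12 \<gamma> (x1, x2))) (at_right 0)"
      using tendsto_K12_reg[OF assms, of "(x1, x2)"] x by simp
    have "C * x1 * x2 / (norm (x1, x2))^4 * ln (exp 1 + 1 / norm (x1, x2)) powr (- \<gamma>) * exp (- ((norm (x1, x2))^2))
        \<le> C * x1 * x2 / (norm (x1, x2))^4 * ln (exp 1 + 1 / norm (x1, x2)) powr (- \<gamma>)"
      using x assms by (intro mult_right_le_one_le) (simp_all add: C_def)
    also have "\<dots> \<le> K12 \<gamma> (x1, x2)"
      using K12_lower[OF assms, of "(x1, x2)"] x by (simp add: C_def)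
    finally show "C * x1 * x2 / (norm (x1, x2))^4 * ln (exp 1 + 1 / norm (x1, x2)) powr (- \<gamma>)
        * exp (- ((norm (x1, x2))^2)) \<le> K12 \<gamma> (x1, x2)" .
  qed
  moreover have "C > 0"
    using assms by (simp add: C_def)
  ultimately show ?thesis by blast
qed

end
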